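(* For every $x\in\{0,1\}^{nd/2}$, \[ \lvert \phi^{-1}(x) \rvert \leq (dn)^{dn/2} \cdot \left(\frac{d^2}{n}\right)^{\lvert x\rvert},\] where $\lvert x\rvert=\sum_{j=1}^{nd/2}x(j)$.
   Context: Fix $0<c<1$, $n,d$ with $dn$ even, and $T_{\max}=\binom d2\frac n3$. Let $\mathcal{G}^*_{d,c}(n)$ be the set of $d$-regular graphs on the labeled nodes $\{1,\dots,n\}$ with at least $c\cdot T_{\max}$ triangles, in which additionally at each node the $d$ incident edges are assigned distinct labels $1,\dots,d$ (so each edge carries two labels, one from each endpoint). For $G^*\in\mathcal{G}^*_{d,c}(n)$ define the configuration ordering on its edges: for edges $e=(i_1j_1)$, $f=(i_2j_2)$ with $i_1<j_1$, $i_2<j_2$, set $e\prec f$ if $i_1<i_2$, or if $i_1=i_2$ and the label of $e$ at their common node $i_1$ is smaller than that of $f$. Let $e_1\prec\dots\prec e_{nd/2}$ be the edges in this order and $G^*[k]$ the subgraph with edges $e_1,\dots,e_k$. Define $\phi:\mathcal{G}^*_{d,c}(n)\to\{0,1\}^{nd/2}$ by $\phi(G^* )(k)=1$ if $e_k$ lies in a triangle of $G^*[k]$, and $0$ otherwise. *)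

theory Defs
  imports Complex_Main
begin

text \<open>A labelled graph G* on nodes 1..n is a pair (E, lab): E is a set of 2-element
edge sets, and lab i j is the label (in 1..d) of edge {i,j} at its endpoint i.
For non-edges we canonically put lab i j = 0, so that (E, lab) encodes G* uniquely.\<close>

type_synonym lgraph = "nat set set \<times> (nat \<Rightarrow> nat \<Rightarrow> nat)"

definition triangles :: "nat set set \<Rightarrow> nat set set" where
  "triangles E = {T. \<exists>a b c. T = {a, b, c} \<and> a \<noteq> b \<and> b \<noteq> c \<and> a \<noteq> c
                        \<and> {a, b} \<in> E \<and> {b, c} \<in> E \<and> {a, c} \<in> E}"

definition Tmax :: "nat \<Rightarrow> nat \<Rightarrow> real" where
  "Tmax n d = real (d choose 2) * real n / 3"

definition Gstar :: "nat \<Rightarrow> nat \<Rightarrow> real \<Rightarrow> lgraph set" where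
  "Gstar d n c = {(E, lab).
      E \<subseteq> {{i, j} | i j. i \<in> {1..n} \<and> j \<in> {1..n} \<and> i \<noteq> j}
    \<and> (\<forall>i\<in>{1..n}. card {e \<in> E. i \<in> e} = d)
    \<and> (\<forall>i\<in>{1..n}. bij_betw (lab i) {j. {i, j} \<in> E} {1..d})
    \<and> (\<forall>i j. {i, j} \<notin> E \<longrightarrow> lab i j = 0)
    \<and> real (card (triangles E)) \<ge> c * Tmax n d}"

definition cprec :: "(nat \<Rightarrow> nat \<Rightarrow> nat) \<Rightarrow> nat set \<Rightarrow> nat set \<Rightarrow> bool" where
  "cprec lab e f \<longleftrightarrow> Min e < Min f \<or>
     (Min e = Min f \<and> lab (Min e) (Max e) < lab (Min f) (Max f))"

text \<open>0-based position of an edge in the configuration order.\<close>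
definition crank :: "lgraph \<Rightarrow> nat set \<Rightarrow> nat" where
  "crank G e = card {f \<in> fst G. cprec (snd G) f e}"

text \<open>e_k (1-based) and the subgraph G*[k] with edges e_1..e_k.\<close>
definition cedge :: "lgraph \<Rightarrow> nat \<Rightarrow> nat set" where
  "cedge G k = (THE e. e \<in> fst G \<and> crank G e = k - 1)"

definition prefix_graph :: "lgraph \<Rightarrow> nat \<Rightarrow> nat set set" where
  "prefix_graph G k = {e \<in> fst G. crank G e < k}"

definition in_triangle :: "nat set set \<Rightarrow> nat set \<Rightarrow> bool" where
  "in_triangle E e \<longleftrightarrow> (\<exists>T \<in> triangles E. e \<subseteq> T)"

definition phi :: "nat \<Rightarrow> nat \<Rightarrow> lgraph \<Rightarrow> nat list" where
  "phi n d G = map (\<lambda>k. if in_triangle (prefix_graph G k) (cedge G k) then 1 else 0)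
                   [1..<n * d div 2 + 1]"

end

theory Submission
  imports Defs "HOL-Library.Product_Lexorder"
begin

(* Write G* as the list of its edges in configuration order, an edge {i < j} being recorded
   as the pair of points (i, label at i), (j, label at j); this code determines G*.
   Given the first k entries, the first point of entry k+1 is forced: edges are ordered by
   their smaller endpoint and its label, so it is the lexicographically least point of
   {1..n} x {1..d} not used so far. The second point can be chosen in at most nd ways, and
   if x(k+1) = 1 its vertex is joined to the first one by a path of length two among the
   first k edges, which leaves at most d^2 * d choices. Multiplying over k gives
   (nd)^(nd/2 - |x|) (d^3)^|x|. *)

lemma card_take_Suc_image_le:
  fixes S :: "'a list set"
  assumes long: "\<And>l. l \<in> S \<Longrightarrow> k < length l"
    and extensions: "\<And>p. finite {l ! k | l. l \<in> S \<and> take k l = p}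
                       \<and> card {l ! k | l. l \<in> S \<and> take k l = p} \<le> b"
    and finite_prefixes: "finite (take k ` S)"
  shows "finite (take (Suc k) ` S) \<and> card (take (Suc k) ` S) \<le> card (take k ` S) * b"
proof -
  define X where "X p = {l ! k | l. l \<in> S \<and> take k l = p}" for p
  have X: "finite (X p)" "card (X p) \<le> b" for p
    using extensions unfolding X_def by auto
  have sub: "take (Suc k) ` S \<subseteq> (\<lambda>(p, a). p @ [a]) ` (SIGMA p:take k ` S. X p)"
  proof
    fix t assume "t \<in> take (Suc k) ` S"
    then obtain l where l: "l \<in> S" "t = take (Suc k) l"
      by auto
    then have "t = take k l @ [l ! k]"
      using long by (simp add: take_Suc_conv_app_nth)
    moreover have "(take k l, l ! k) \<in> (SIGMA p:take k ` S. X p)"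
      using l unfolding X_def by auto
    ultimately show "t \<in> (\<lambda>(p, a). p @ [a]) ` (SIGMA p:take k ` S. X p)"
      by force
  qed
  have finite_Sigma: "finite (SIGMA p:take k ` S. X p)"
    using finite_prefixes X by auto
  have "card (take (Suc k) ` S) \<le> card (SIGMA p:take k ` S. X p)"
    using sub finite_Sigma by (meson card_image_le card_mono finite_imageI le_trans)
  also have "\<dots> = (\<Sum>p\<in>take k ` S. card (X p))"
    using finite_prefixes X by simp
  also have "\<dots> \<le> card (take k ` S) * b"
    using sum_mono[of "take k ` S" "\<lambda>p. card (X p)" "\<lambda>_. b"] X by simp
  finally show ?thesis
    using sub finite_Sigma by (meson finite_imageI finite_subset)
qed

lemma card_le_prod_extensions:
  fixes S :: "'a list set"
  assumes length: "\<And>l. l \<in> S \<Longrightarrow> length l = N"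
    and extensions: "\<And>k p. k < N \<Longrightarrow> finite {l ! k | l. l \<in> S \<and> take k l = p}
                       \<and> card {l ! k | l. l \<in> S \<and> take k l = p} \<le> b k"
  shows "card S \<le> (\<Prod>k<N. b k)"
proof -
  have "finite (take k ` S) \<and> card (take k ` S) \<le> (\<Prod>i<k. b i)" if "k \<le> N" for k
    using that
  proof (induction k)
    case 0
    have "take 0 ` S \<subseteq> {[]}"
      by auto
    then show ?case
      using card_mono[of "{[]}"] by (auto intro: finite_subset)
  next
    case (Suc k)
    then have IH: "finite (take k ` S)" "card (take k ` S) \<le> (\<Prod>i<k. b i)"
      by auto
    have "finite (take (Suc k) ` S) \<and> card (take (Suc k) ` S) \<le> card (take k ` S) * b k"
      by (rule card_take_Suc_image_le) (use length extensions Suc.prems IH(1) in auto)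
    moreover have "card (take k ` S) * b k \<le> (\<Prod>i<Suc k. b i)"
      using IH(2) by simp
    ultimately show ?case
      using le_trans by blast
  qed
  moreover have "take N ` S = S"
    using length by (force simp: image_iff)
  ultimately show ?thesis
    by force
qed

lemma cprec_trans: "cprec lab e f \<Longrightarrow> cprec lab f g \<Longrightarrow> cprec lab e g"
  unfolding cprec_def by auto

lemma cprec_irrefl: "\<not> cprec lab e e"
  unfolding cprec_def by auto

lemma prefix_graph_subset: "prefix_graph G k \<subseteq> fst G"
  unfolding prefix_graph_def by auto

definition two_step :: "nat set set \<Rightarrow> nat \<Rightarrow> nat set" where
  "two_step F v = {w. \<exists>u. {v, u} \<in> F \<and> {u, w} \<in> F}"

lemma in_triangle_insert_two_step:
  assumes "in_triangle (insert {a, b} F) {a, b}" and "a \<noteq> b"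
  shows "b \<in> two_step F a"
proof -
  obtain T where T: "T \<in> triangles (insert {a, b} F)" "{a, b} \<subseteq> T"
    using assms(1) unfolding in_triangle_def by blast
  then obtain x y z where xyz: "T = {x, y, z}" "x \<noteq> y" "y \<noteq> z" "x \<noteq> z"
    and edges: "{{x, y}, {y, z}, {x, z}} \<subseteq> insert {a, b} F"
    unfolding triangles_def by auto
  have pair_edge: "{p, q} \<in> insert {a, b} F" if "p \<in> T" "q \<in> T" "p \<noteq> q" for p q
  proof -
    have "{p, q} \<in> {{x, y}, {y, z}, {x, z}}"
      using that xyz by (auto simp: insert_commute)
    then show ?thesis using edges by blast
  qed
  obtain w where w: "w \<in> T" "w \<noteq> a" "w \<noteq> b"
    using T(2) xyz assms(2) by auto
  have "{a, w} \<in> F" "{w, b} \<in> F"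
    using pair_edge[of a w] pair_edge[of w b] w T(2) by (auto simp: doubleton_eq_iff)
  then show ?thesis
    unfolding two_step_def by blast
qed

locale labelled_regular_graph =
  fixes n d :: nat and E :: "nat set set" and lab :: "nat \<Rightarrow> nat \<Rightarrow> nat"
  assumes edges: "E \<subseteq> {{i, j} | i j. i \<in> {1..n} \<and> j \<in> {1..n} \<and> i \<noteq> j}"
    and degree: "i \<in> {1..n} \<Longrightarrow> card {e \<in> E. i \<in> e} = d"
    and lab_bij: "i \<in> {1..n} \<Longrightarrow> bij_betw (lab i) {j. {i, j} \<in> E} {1..d}"
    and lab_non_edge: "{i, j} \<notin> E \<Longrightarrow> lab i j = 0"

lemma Gstar_labelled_regular_graph:
  "(E, lab) \<in> Gstar d n c \<Longrightarrow> labelled_regular_graph n d E lab"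
  unfolding Gstar_def labelled_regular_graph_def by auto

context labelled_regular_graph
begin

abbreviation G :: lgraph where "G \<equiv> (E, lab)"

lemma edge_vertices:
  assumes "{i, j} \<in> E"
  shows "i \<in> {1..n}" "j \<in> {1..n}" "i \<noteq> j"
proof -
  obtain i' j' where "{i, j} = {i', j'}" "i' \<in> {1..n}" "j' \<in> {1..n}" "i' \<noteq> j'"
    using assms edges by blast
  then show "i \<in> {1..n}" "j \<in> {1..n}" "i \<noteq> j"
    by (auto simp: doubleton_eq_iff)
qed

lemma edge_Min_Max:
  assumes "e \<in> E"
  shows "{Min e, Max e} = e" "Min e < Max e"
proof -
  obtain i j where "e = {i, j}" "i \<noteq> j"
    using assms edges by blast
  then show "{Min e, Max e} = e" "Min e < Max e"
    by auto
qed

lemma finite_edges: "finite E"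
proof -
  have "E \<subseteq> Pow {1..n}"
    using edges by auto
  then show ?thesis
    by (rule finite_subset) simp
qed

lemma lab_in_range: "{i, j} \<in> E \<Longrightarrow> lab i j \<in> {1..d}"
  using bij_betwE[OF lab_bij[OF edge_vertices(1)]] by blast

lemma lab_inj: "{i, j} \<in> E \<Longrightarrow> {i, j'} \<in> E \<Longrightarrow> lab i j = lab i j' \<Longrightarrow> j = j'"
  using lab_bij[OF edge_vertices(1)] by (auto simp: bij_betw_def inj_on_def)

lemma neighbours_finite_card:
  "finite {w. {v, w} \<in> E} \<and> card {w. {v, w} \<in> E} \<le> d"
proof (cases "v \<in> {1..n}")
  case True
  then show ?thesis
    using lab_bij bij_betw_same_card bij_betw_finite by fastforce
next
  case False
  then have "{w. {v, w} \<in> E} = {}"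
    using edge_vertices(1) by blast
  then show ?thesis by simp
qed

lemma finite_two_step_card:
  assumes "F \<subseteq> E"
  shows "finite (two_step F v) \<and> card (two_step F v) \<le> d * d"
proof -
  define N where "N u = {w. {u, w} \<in> E}" for u
  have N: "finite (N u)" "card (N u) \<le> d" for u
    using neighbours_finite_card unfolding N_def by auto
  have "two_step F v \<subseteq> (\<Union>u\<in>N v. N u)"
    using assms unfolding two_step_def N_def by blast
  moreover have "card (\<Union>u\<in>N v. N u) \<le> d * d"
  proof -
    have "card (\<Union>u\<in>N v. N u) \<le> (\<Sum>u\<in>N v. card (N u))"
      using N by (simp add: card_UN_le)
    also have "\<dots> \<le> card (N v) * d"
      using sum_mono[of "N v" "\<lambda>u. card (N u)" "\<lambda>_. d"] N by simp
    also have "\<dots> \<le> d * d"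
      using N by simp
    finally show ?thesis .
  qed
  ultimately show ?thesis
    using N by (meson card_mono finite_UN_I finite_subset le_trans)
qed

lemma card_edges: "card E = n * d div 2"
proof -
  have "n * d = (\<Sum>i\<in>{1..n}. card {e \<in> E. i \<in> e})"
    using degree by simp
  also have "\<dots> = (\<Sum>e\<in>E. card {i \<in> {1..n}. i \<in> e})"
    using sum.swap_restrict[OF _ finite_edges, of "{1..n}" "\<lambda>_ _. 1::nat" "\<lambda>i e. i \<in> e"]
    by simp
  also have "\<dots> = (\<Sum>e\<in>E. 2)"
  proof (rule sum.cong)
    fix e assume "e \<in> E"
    then obtain i j where "e = {i, j}" "i \<in> {1..n}" "j \<in> {1..n}" "i \<noteq> j"
      using edges by blast
    then have "{i \<in> {1..n}. i \<in> e} = {i, j}"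
      by auto
    then show "card {i \<in> {1..n}. i \<in> e} = 2"
      using \<open>i \<noteq> j\<close> by simp
  qed simp
  finally show ?thesis by simp
qed

lemma cprec_total:
  assumes "e \<in> E" "f \<in> E" "e \<noteq> f"
  shows "cprec lab e f \<or> cprec lab f e"
proof (rule ccontr)
  assume "\<not> (cprec lab e f \<or> cprec lab f e)"
  then have Min: "Min e = Min f" and lab_eq: "lab (Min e) (Max e) = lab (Min e) (Max f)"
    unfolding cprec_def by auto
  have "{Min e, Max e} \<in> E" "{Min e, Max f} \<in> E"
    using assms(1,2) edge_Min_Max(1) Min by metis+
  then have "Max e = Max f"
    using lab_inj lab_eq by blast
  then show False
    using assms edge_Min_Max(1) Min by metis
qed

lemma crank_less_if_cprec:
  assumes "f \<in> E" "cprec lab f e"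
  shows "crank G f < crank G e"
proof -
  have "{g \<in> E. cprec lab g f} \<subset> {g \<in> E. cprec lab g e}"
    using assms cprec_trans[of lab _ f e] cprec_irrefl[of lab f] by blast
  then show ?thesis
    unfolding crank_def using finite_edges by (simp add: psubset_card_mono)
qed

lemma bij_betw_crank: "bij_betw (crank G) E {..<card E}"
proof -
  have inj: "inj_on (crank G) E"
  proof (rule inj_onI, rule ccontr)
    fix e f assume "e \<in> E" "f \<in> E" "crank G e = crank G f" "e \<noteq> f"
    then show False
      using cprec_total crank_less_if_cprec by (metis less_irrefl)
  qed
  have "crank G e < card E" if "e \<in> E" for e
  proof -
    have "{f \<in> E. cprec lab f e} \<subset> E"
      using that cprec_irrefl[of lab e] by blast
    then show ?thesis
      unfolding crank_def using finite_edges by (simp add: psubset_card_mono)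
  qed
  then have "crank G ` E \<subseteq> {..<card E}"
    by auto
  moreover have "card (crank G ` E) = card {..<card E}"
    using card_image[OF inj] by simp
  ultimately show ?thesis
    using inj by (simp add: bij_betw_def card_subset_eq)
qed

lemma cedge_crank: "e \<in> E \<Longrightarrow> cedge G (Suc (crank G e)) = e"
  unfolding cedge_def
  by (rule the_equality) (use bij_betw_imp_inj_on[OF bij_betw_crank] in \<open>auto simp: inj_on_eq_iff\<close>)

lemma
  assumes "k < card E"
  shows cedge_in_edges: "cedge G (Suc k) \<in> E"
    and crank_cedge: "crank G (cedge G (Suc k)) = k"
proof -
  have "k \<in> crank G ` E"
    using bij_betw_crank assms by (simp add: bij_betw_def)
  then obtain e where "e \<in> E" "crank G e = k"
    by blast
  then show "cedge G (Suc k) \<in> E" "crank G (cedge G (Suc k)) = k"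
    using cedge_crank by auto
qed

lemma
  assumes "k < card E"
  shows prefix_graph_Suc: "prefix_graph G (Suc k) = insert (cedge G (Suc k)) (prefix_graph G k)"
    and cedge_notin_prefix_graph: "cedge G (Suc k) \<notin> prefix_graph G k"
proof -
  have "{f \<in> E. crank G f = k} = {cedge G (Suc k)}"
  proof (intro equalityI subsetI)
    fix f assume "f \<in> {f \<in> E. crank G f = k}"
    then show "f \<in> {cedge G (Suc k)}"
      using cedge_crank[of f] by simp
  qed (use cedge_in_edges[OF assms] crank_cedge[OF assms] in simp)
  moreover have "prefix_graph G (Suc k) = prefix_graph G k \<union> {f \<in> E. crank G f = k}"
    unfolding prefix_graph_def by (auto simp: less_Suc_eq)
  ultimately show "prefix_graph G (Suc k) = insert (cedge G (Suc k)) (prefix_graph G k)"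
    by simp
  show "cedge G (Suc k) \<notin> prefix_graph G k"
    using crank_cedge[OF assms] unfolding prefix_graph_def by simp
qed

lemma prefix_graph_card_edges: "prefix_graph G (card E) = E"
  using bij_betw_crank unfolding prefix_graph_def bij_betw_def by auto

end

(* A point (v, l) is the half-edge at vertex v carrying label l; points are compared
   lexicographically. *)
type_synonym point = "nat \<times> nat"

definition edge_code :: "(nat \<Rightarrow> nat \<Rightarrow> nat) \<Rightarrow> nat set \<Rightarrow> point \<times> point" where
  "edge_code lab e = ((Min e, lab (Min e) (Max e)), (Max e, lab (Max e) (Min e)))"

definition encode :: "nat \<Rightarrow> lgraph \<Rightarrow> (point \<times> point) list" where
  "encode m G = map (\<lambda>k. edge_code (snd G) (cedge G k)) [1..<Suc m]"

definition code_edges :: "(point \<times> point) list \<Rightarrow> nat set set" where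
  "code_edges P = (\<lambda>(p, q). {fst p, fst q}) ` set P"

definition used_points :: "(point \<times> point) list \<Rightarrow> point set" where
  "used_points P = fst ` set P \<union> snd ` set P"

definition first_free_point :: "nat \<Rightarrow> nat \<Rightarrow> (point \<times> point) list \<Rightarrow> point" where
  "first_free_point n d P = Min ({1..n} \<times> {1..d} - used_points P)"

definition next_candidates :: "nat \<Rightarrow> nat \<Rightarrow> (point \<times> point) list \<Rightarrow> bool \<Rightarrow> (point \<times> point) set" where
  "next_candidates n d P t =
     {first_free_point n d P}
       \<times> ((if t then two_step (code_edges P) (fst (first_free_point n d P)) else {1..n}) \<times> {1..d})"

lemma length_encode: "length (encode m G) = m"
  by (simp add: encode_def)

lemma encode_Suc: "encode (Suc k) G = encode k G @ [edge_code (snd G) (cedge G (Suc k))]"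
  by (simp add: encode_def)

lemma take_encode: "k \<le> m \<Longrightarrow> take k (encode m G) = encode k G"
  by (simp add: encode_def take_map take_upt del: upt_Suc)

lemma nth_encode: "k < m \<Longrightarrow> encode m G ! k = edge_code (snd G) (cedge G (Suc k))"
  by (simp add: encode_def del: upt_Suc)

lemma nth_phi:
  "k < n * d div 2 \<Longrightarrow>
     phi n d G ! k = (if in_triangle (prefix_graph G (Suc k)) (cedge G (Suc k)) then 1 else 0)"
  by (simp add: phi_def del: upt_Suc)

context labelled_regular_graph
begin

lemma set_encode: "k \<le> card E \<Longrightarrow> set (encode k G) = edge_code lab ` prefix_graph G k"
proof (induction k)
  case 0
  then show ?case
    by (simp add: encode_def prefix_graph_def)
next
  case (Suc k)
  then show ?case
    by (simp add: encode_Suc prefix_graph_Suc)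
qed

lemma code_edges_encode: "k \<le> card E \<Longrightarrow> code_edges (encode k G) = prefix_graph G k"
proof -
  assume "k \<le> card E"
  then have "code_edges (encode k G) = (\<lambda>e. {Min e, Max e}) ` prefix_graph G k"
    by (simp add: code_edges_def set_encode image_image edge_code_def)
  also have "\<dots> = prefix_graph G k"
    using edge_Min_Max(1) unfolding prefix_graph_def by (auto simp: image_iff)
  finally show ?thesis .
qed

lemma used_points_encode:
  assumes "k \<le> card E"
  shows "used_points (encode k G) = {(v, lab v w) | v w. {v, w} \<in> prefix_graph G k}"
    (is "_ = ?P")
proof -
  let ?F = "prefix_graph G k"
  have F: "e \<in> E" "{Min e, Max e} = e" "Min e < Max e" if "e \<in> ?F" for e
    using that edge_Min_Max unfolding prefix_graph_def by auto
  have "used_points (encode k G)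
      = (\<lambda>e. (Min e, lab (Min e) (Max e))) ` ?F \<union> (\<lambda>e. (Max e, lab (Max e) (Min e))) ` ?F"
    using assms by (simp add: used_points_def set_encode image_image edge_code_def)
  also have "\<dots> = ?P"
  proof (intro equalityI subsetI)
    fix p assume "p \<in> (\<lambda>e. (Min e, lab (Min e) (Max e))) ` ?F \<union> (\<lambda>e. (Max e, lab (Max e) (Min e))) ` ?F"
    then obtain e where e: "e \<in> ?F"
      and "p = (Min e, lab (Min e) (Max e)) \<or> p = (Max e, lab (Max e) (Min e))"
      by blast
    moreover have "{Min e, Max e} \<in> ?F" "{Max e, Min e} \<in> ?F"
      using F(2)[OF e] e by (metis insert_commute)+
    ultimately show "p \<in> ?P"
      by blast
  next
    fix p assume "p \<in> ?P"
    then obtain v w where p: "p = (v, lab v w)" and vw: "{v, w} \<in> ?F"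
      by blast
    have "v \<noteq> w"
      using F(3)[OF vw] by auto
    then consider "Min {v, w} = v" "Max {v, w} = w" | "Min {v, w} = w" "Max {v, w} = v"
      by (cases "v < w") auto
    then show "p \<in> (\<lambda>e. (Min e, lab (Min e) (Max e))) ` ?F \<union> (\<lambda>e. (Max e, lab (Max e) (Min e))) ` ?F"
      using p vw by cases (force intro: rev_image_eqI)+
  qed
  finally show ?thesis .
qed

lemma cprec_edge_at_point:
  assumes e: "e \<in> E" and v: "v \<in> {1..n}" and l: "l \<in> {1..d}"
    and less: "(v, l) < (Min e, lab (Min e) (Max e))"
  obtains w where "{v, w} \<in> E" "lab v w = l" "cprec lab {v, w} e"
proof -
  have "l \<in> lab v ` {w. {v, w} \<in> E}"
    using bij_betw_imp_surj_on[OF lab_bij[OF v]] l by simp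
  then obtain w where w: "{v, w} \<in> E" "lab v w = l"
    by blast
  have "Min {v, w} \<le> v" "v \<noteq> w"
    using edge_vertices(3)[OF w(1)] by auto
  have "cprec lab {v, w} e"
  proof (cases "Min {v, w} < Min e")
    case False
    then have "Min {v, w} = v" "v = Min e" "l < lab (Min e) (Max e)"
      using less \<open>Min {v, w} \<le> v\<close> by auto
    moreover have "Max {v, w} = w"
      using \<open>Min {v, w} = v\<close> \<open>v \<noteq> w\<close> by auto
    ultimately show ?thesis
      unfolding cprec_def using w(2) by simp
  qed (simp add: cprec_def)
  with w that show ?thesis
    by blast
qed

lemma first_point_not_used:
  assumes k: "k < card E"
  defines "e \<equiv> cedge G (Suc k)"
  shows "(Min e, lab (Min e) (Max e)) \<notin> used_points (encode k G)"
proof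
  assume "(Min e, lab (Min e) (Max e)) \<in> used_points (encode k G)"
  then obtain w where w: "{Min e, w} \<in> prefix_graph G k" "lab (Min e) w = lab (Min e) (Max e)"
    unfolding used_points_encode[OF less_imp_le[OF k]] by fastforce
  have e: "e \<in> E" "{Min e, Max e} = e"
    using cedge_in_edges[OF k] edge_Min_Max unfolding e_def by auto
  have "{Min e, w} \<in> E"
    using w(1) prefix_graph_subset[of G k] by auto
  then have "w = Max e"
    using lab_inj w(2) e by simp
  then show False
    using w(1) e(2) cedge_notin_prefix_graph[OF k] by (simp add: e_def)
qed

lemma first_free_point_encode:
  assumes k: "k < card E"
  defines "e \<equiv> cedge G (Suc k)"
  shows "first_free_point n d (encode k G) = (Min e, lab (Min e) (Max e))"
proof -
  have e: "e \<in> E" "{Min e, Max e} = e" "crank G e = k"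
    using cedge_in_edges[OF k] crank_cedge[OF k] edge_Min_Max unfolding e_def by auto
  have below_used: "(v, l) \<in> used_points (encode k G)"
    if vl: "v \<in> {1..n}" "l \<in> {1..d}" "(v, l) < (Min e, lab (Min e) (Max e))" for v l
  proof -
    obtain w where w: "{v, w} \<in> E" "lab v w = l" "cprec lab {v, w} e"
      using cprec_edge_at_point[OF e(1) vl] .
    then have "{v, w} \<in> prefix_graph G k"
      using crank_less_if_cprec e(3) unfolding prefix_graph_def by auto
    then show ?thesis
      unfolding used_points_encode[OF less_imp_le[OF k]] using w(2) by blast
  qed
  have "{Min e, Max e} \<in> E"
    using e by simp
  then have "(Min e, lab (Min e) (Max e)) \<in> {1..n} \<times> {1..d} - used_points (encode k G)"
    using edge_vertices(1) lab_in_range first_point_not_used[OF k] unfolding e_def by blast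
  moreover have "(Min e, lab (Min e) (Max e)) \<le> p"
    if "p \<in> {1..n} \<times> {1..d} - used_points (encode k G)" for p
    using that below_used by (cases p) force
  ultimately show ?thesis
    unfolding first_free_point_def by (intro Min_eqI) auto
qed

lemma encode_nth_in_next_candidates:
  assumes k: "k < card E"
  shows "encode (card E) G ! k \<in> next_candidates n d (encode k G) (phi n d G ! k = 1)"
proof -
  define e where "e = cedge G (Suc k)"
  have e: "e \<in> E" "{Min e, Max e} = e" "Min e < Max e"
    using cedge_in_edges[OF k] crank_cedge[OF k] edge_Min_Max unfolding e_def by auto
  then have "{Max e, Min e} \<in> E"
    by (metis insert_commute)
  then have range: "Max e \<in> {1..n}" "lab (Max e) (Min e) \<in> {1..d}"
    using edge_vertices(1) lab_in_range by blast+
  have "Max e \<in> two_step (code_edges (encode k G)) (Min e)" if "phi n d G ! k = 1"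
  proof -
    have "k < n * d div 2"
      using k card_edges by simp
    then have "in_triangle (prefix_graph G (Suc k)) (cedge G (Suc k))"
      using that nth_phi[of k n d G] by (metis zero_neq_one)
    then have "in_triangle (prefix_graph G (Suc k)) e"
      unfolding e_def .
    moreover have "prefix_graph G (Suc k) = insert e (prefix_graph G k)"
      using prefix_graph_Suc[OF k] unfolding e_def .
    ultimately have "in_triangle (insert {Min e, Max e} (prefix_graph G k)) {Min e, Max e}"
      using e(2) by simp
    then have "Max e \<in> two_step (prefix_graph G k) (Min e)"
      by (rule in_triangle_insert_two_step) (use e(3) in simp)
    then show ?thesis
      using code_edges_encode k by simp
  qed
  moreover have "encode (card E) G ! k = edge_code lab e"
    using nth_encode k unfolding e_def by simp
  ultimately show ?thesis
    using range first_free_point_encode[OF k, folded e_def]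
    by (simp add: next_candidates_def edge_code_def)
qed

lemma finite_card_next_candidates:
  assumes "k \<le> card E"
  shows "finite (next_candidates n d (encode k G) t)
    \<and> card (next_candidates n d (encode k G) t) \<le> (if t then d ^ 3 else n * d)"
proof -
  define C where "C = (if t then two_step (code_edges (encode k G)) (fst (first_free_point n d (encode k G))) else {1..n})"
  have "finite C \<and> card C \<le> (if t then d * d else n)"
    using finite_two_step_card code_edges_encode[OF assms] unfolding C_def prefix_graph_def by auto
  moreover have "next_candidates n d (encode k G) t = {first_free_point n d (encode k G)} \<times> (C \<times> {1..d})"
    unfolding next_candidates_def C_def ..
  ultimately show ?thesis
    by (auto simp: card_cartesian_product power3_eq_cube)
qed

end

lemma edge_code_eq_imp_lab_eq:
  assumes "edge_code lab {i, j} = edge_code lab' {i, j}" "i \<noteq> j"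
  shows "lab i j = lab' i j"
  using assms by (cases "i < j") (auto simp: edge_code_def)

lemma lab_eq_if_edge_codes_eq:
  assumes "labelled_regular_graph n d E lab" "labelled_regular_graph n d E lab'"
    and codes: "edge_code lab ` E = edge_code lab' ` E"
  shows "lab = lab'"
proof (intro ext)
  interpret G: labelled_regular_graph n d E lab
    by fact
  interpret G': labelled_regular_graph n d E lab'
    by fact
  fix i j
  show "lab i j = lab' i j"
  proof (cases "{i, j} \<in> E")
    case True
    then obtain f where f: "f \<in> E" "edge_code lab {i, j} = edge_code lab' f"
      using codes by (metis image_eqI imageE)
    then have "{Min {i, j}, Max {i, j}} = {Min f, Max f}"
      by (simp add: edge_code_def)
    then have "f = {i, j}"
      using G.edge_Min_Max(1) f(1) True by metis
    then show ?thesis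
      using edge_code_eq_imp_lab_eq f(2) G.edge_vertices(3)[OF True] by simp
  next
    case False
    then show ?thesis
      using G.lab_non_edge G'.lab_non_edge by simp
  qed
qed

lemma inj_on_encode: "inj_on (encode (n * d div 2)) {(E, lab). labelled_regular_graph n d E lab}"
proof (rule inj_onI, clarsimp)
  fix E lab E' lab'
  assume G: "labelled_regular_graph n d E lab" and G': "labelled_regular_graph n d E' lab'"
    and eq: "encode (n * d div 2) (E, lab) = encode (n * d div 2) (E', lab')"
  interpret G: labelled_regular_graph n d E lab
    by fact
  interpret G': labelled_regular_graph n d E' lab'
    by fact
  have encode: "encode (card E) (E, lab) = encode (card E') (E', lab')"
    using eq by (simp add: G.card_edges G'.card_edges)
  have "E = code_edges (encode (card E) (E, lab))"
    using G.code_edges_encode G.prefix_graph_card_edges by simp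
  also have "\<dots> = E'"
    using G'.code_edges_encode G'.prefix_graph_card_edges encode by simp
  finally have E: "E = E'" .
  have "edge_code lab ` E = edge_code lab' ` E'"
    using G.set_encode[of "card E"] G'.set_encode[of "card E'"] encode
    by (simp add: G.prefix_graph_card_edges G'.prefix_graph_card_edges)
  then have "lab = lab'"
    using lab_eq_if_edge_codes_eq[OF G G'[folded E]] E by simp
  with E show "E = E' \<and> lab = lab'"
    by simp
qed

lemma finite_card_next_entries:
  assumes A: "\<And>E lab. (E, lab) \<in> A \<Longrightarrow> labelled_regular_graph n d E lab \<and> phi n d (E, lab) = x"
    and k: "k < n * d div 2"
  shows "finite {l ! k | l. l \<in> encode (n * d div 2) ` A \<and> take k l = p}
    \<and> card {l ! k | l. l \<in> encode (n * d div 2) ` A \<and> take k l = p} \<le> (if x ! k = 1 then d ^ 3 else n * d)"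
proof (cases "\<exists>G\<in>A. take k (encode (n * d div 2) G) = p")
  case False
  then have empty: "{l ! k | l. l \<in> encode (n * d div 2) ` A \<and> take k l = p} = {}"
    by auto
  show ?thesis
    unfolding empty by simp
next
  case True
  then obtain E0 lab0 where "(E0, lab0) \<in> A" "p = encode k (E0, lab0)"
    using k take_encode by fastforce
  then interpret G0: labelled_regular_graph n d E0 lab0
    using A by blast
  have "{l ! k | l. l \<in> encode (n * d div 2) ` A \<and> take k l = p} \<subseteq> next_candidates n d p (x ! k = 1)"
  proof
    fix y assume "y \<in> {l ! k | l. l \<in> encode (n * d div 2) ` A \<and> take k l = p}"
    then obtain E lab where G: "(E, lab) \<in> A" and y: "y = encode (n * d div 2) (E, lab) ! k"
      and p: "take k (encode (n * d div 2) (E, lab)) = p"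
      by auto
    interpret labelled_regular_graph n d E lab
      using A[OF G] by blast
    show "y \<in> next_candidates n d p (x ! k = 1)"
      using encode_nth_in_next_candidates[of k] k y p A[OF G] card_edges take_encode by simp
  qed
  moreover have "finite (next_candidates n d p (x ! k = 1))
      \<and> card (next_candidates n d p (x ! k = 1)) \<le> (if x ! k = 1 then d ^ 3 else n * d)"
    using G0.finite_card_next_candidates[of k] k G0.card_edges \<open>p = _\<close> by simp
  ultimately show ?thesis
    by (meson card_mono finite_subset le_trans)
qed

lemma prod_step_bounds_eq:
  fixes x :: "nat list"
  assumes "length x = n * d div 2" and "set x \<subseteq> {0, 1}"
  shows "real (\<Prod>k<n * d div 2. if x ! k = 1 then d ^ 3 else n * d)
    = real (d * n) ^ (d * n div 2) * (real d ^ 2 / real n) ^ sum_list x"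
proof (cases "n = 0")
  case True
  then show ?thesis
    using assms(1) by simp
next
  case False
  define q where "q = real d ^ 2 / real n"
  have "real (if x ! k = 1 then d ^ 3 else n * d) = real (d * n) * q ^ (x ! k)"
    if "k < n * d div 2" for k
  proof -
    have "x ! k \<in> set x"
      using assms(1) that by simp
    then have "x ! k \<in> {0, 1}"
      using assms(2) by blast
    then show ?thesis
      unfolding q_def using False by (auto simp: field_simps power2_eq_square power3_eq_cube)
  qed
  then have "real (\<Prod>k<n * d div 2. if x ! k = 1 then d ^ 3 else n * d)
      = (\<Prod>k<n * d div 2. real (d * n) * q ^ (x ! k))"
    by (simp add: of_nat_prod)
  also have "\<dots> = real (d * n) ^ (n * d div 2) * q ^ (\<Sum>k<n * d div 2. x ! k)"
    by (simp add: prod.distrib power_sum)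
  also have "(\<Sum>k<n * d div 2. x ! k) = sum_list x"
    using assms(1) by (simp add: sum_list_sum_nth atLeast0LessThan)
  finally show ?thesis
    unfolding q_def by (simp add: mult.commute)
qed

theorem lemma1:
  fixes n d :: nat and c :: real and x :: "nat list"
  assumes "0 < c" and "c < 1" and "even (d * n)"
    and "length x = n * d div 2" and "set x \<subseteq> {0, 1}"
  shows "real (card {G \<in> Gstar d n c. phi n d G = x})
           \<le> real (d * n) ^ (d * n div 2) * (real d ^ 2 / real n) ^ (sum_list x)"
proof -
  define m where "m = n * d div 2"
  define A where "A = {G \<in> Gstar d n c. phi n d G = x}"
  have A: "labelled_regular_graph n d E lab \<and> phi n d (E, lab) = x" if "(E, lab) \<in> A" for E lab
    using that Gstar_labelled_regular_graph unfolding A_def by blast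
  have "inj_on (encode m) A"
    unfolding m_def by (rule inj_on_subset[OF inj_on_encode]) (use A in auto)
  then have "card A = card (encode m ` A)"
    by (simp add: card_image)
  also have "\<dots> \<le> (\<Prod>k<m. if x ! k = 1 then d ^ 3 else n * d)"
    by (rule card_le_prod_extensions) (use finite_card_next_entries[OF A] m_def in \<open>auto simp: length_encode\<close>)
  finally have "real (card A) \<le> real (\<Prod>k<m. if x ! k = 1 then d ^ 3 else n * d)"
    by (rule of_nat_mono)
  then show ?thesis
    using prod_step_bounds_eq[OF assms(4,5)] unfolding A_def m_def by simp
qed

end
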